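(* Consider an $M/G/1$ queue (i.e., $M^X/G/1$ with batch size $X\equiv 1$) operating under the LCFS-p-resume discipline, with Poisson arrivals of rate $\lambda$, i.i.d. service times distributed as $S$ independent of the arrivals, and $\lambda ES<1$. Let $M$ be the maximum number of customers in the system during a busy period and $P(b)=P(M\leq b)$. Then for all integers $b\geq 1$, $$P(b)=E\big[e^{-\lambda(1-P(b-1))S}\big].$$
   Context: Under LCFS-p-resume, the customer who has been in the system the least amount of time is always served, newly arriving customers preempt the customer in service, service is non-idling, and preempted customers resume service where they left off. *)

theory Defs
  imports "HOL-Probability.Probability" "HOL-Library.Extended_Nat"
begin

text \<open>The state is the stack of remaining service requirements of the
customers present; the head of the list is the customer in service (the one that
arrived most recently).\<close>

fun lcfs_serve :: "real list \<Rightarrow> real \<Rightarrow> real list" where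
  "lcfs_serve [] a = []"
| "lcfs_serve (x # xs) a = (if x \<le> a then lcfs_serve xs (a - x) else (x - a) # xs)"

text \<open>Customer 0 starts the busy period at time 0; A n is the interarrival time
between customer n and customer n+1; S n is the service time of customer n.
lcfs_stack A S n is the system content just after the arrival of customer n.\<close>
fun lcfs_stack :: "(nat \<Rightarrow> real) \<Rightarrow> (nat \<Rightarrow> real) \<Rightarrow> nat \<Rightarrow> real list" where
  "lcfs_stack A S 0 = [S 0]"
| "lcfs_stack A S (Suc n) = S (Suc n) # lcfs_serve (lcfs_stack A S n) (A n)"

definition in_busy_period :: "(nat \<Rightarrow> real) \<Rightarrow> (nat \<Rightarrow> real) \<Rightarrow> nat \<Rightarrow> bool" where
  "in_busy_period A S n \<longleftrightarrow> (\<forall>k<n. lcfs_serve (lcfs_stack A S k) (A k) \<noteq> [])"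

text \<open>Maximum number of customers in the system during the busy period
(the number in system only increases at arrival epochs).\<close>
definition busy_max :: "(nat \<Rightarrow> real) \<Rightarrow> (nat \<Rightarrow> real) \<Rightarrow> enat" where
  "busy_max A S = (SUP n \<in> {n. in_busy_period A S n}. enat (length (lcfs_stack A S n)))"

end

theory Submission
  imports Defs
begin

(* Fix b and assume the recursion below b, with Q m = P(M \<le> m).  While the customer at
   level j of the LCFS stack is in service, each arrival opens a sub-busy period that stays
   within the b - j free levels with probability Q (b - j), independently of everything
   else; so a stack with remaining works x\<^sub>j is cleared without exceeding b with
   probability exp (- \<Sum>\<^sub>j \<lambda> (1 - Q (b - j)) x\<^sub>j).  Evaluated at the arrival
   epochs, this conditional probability of success is a martingale: integrating out the
   next exponential interarrival time and the next service time reproduces it.  A busy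
   period that never ends but stays within b has probability 0 (unless S = 0 almost surely,
   a run of b short interarrival times with long services has positive probability and
   pushes the queue above b), so P(M \<le> b) equals the initial value
   E exp (- \<lambda> (1 - P (b - 1)) S). *)

section \<open>Measurable lists of reals\<close>

definition list_coords :: "real list \<Rightarrow> nat \<times> (nat \<Rightarrow> real)" where
  "list_coords xs = (length xs, \<lambda>i. if i < length xs then xs ! i else 0)"

abbreviation coords_space :: "(nat \<times> (nat \<Rightarrow> real)) measure" where
  "coords_space \<equiv> count_space UNIV \<Otimes>\<^sub>M PiM UNIV (\<lambda>_. borel)"

(* Real lists carry no sigma-algebra of their own: a list-valued map counts as measurable
   when its length and its zero-padded entries are. *)
definition measurable_real_list :: "'a measure \<Rightarrow> ('a \<Rightarrow> real list) \<Rightarrow> bool" where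
  "measurable_real_list M f \<longleftrightarrow> (\<lambda>w. list_coords (f w)) \<in> M \<rightarrow>\<^sub>M coords_space"

lemma map_list_coords: "map (snd (list_coords xs)) [0..<fst (list_coords xs)] = xs"
  unfolding list_coords_def by (rule nth_equalityI) auto

lemma list_coords_Cons:
  "list_coords (x # xs) = (Suc (fst (list_coords xs)), case_nat x (snd (list_coords xs)))"
  unfolding list_coords_def by (auto simp: fun_eq_iff split: nat.split)

lemma measurable_real_list_apply:
  assumes f: "measurable_real_list M f"
    and g: "\<And>k. (\<lambda>v. g (map v [0..<k])) \<in> PiM UNIV (\<lambda>_. borel) \<rightarrow>\<^sub>M N"
  shows "(\<lambda>w. g (f w)) \<in> M \<rightarrow>\<^sub>M N"
proof -
  have "(\<lambda>p. g (map (snd p) [0..<fst p])) \<in> coords_space \<rightarrow>\<^sub>M N"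
    by (rule measurable_pair_measure_countable1) (use g in auto)
  from measurable_compose[OF f[unfolded measurable_real_list_def] this] show ?thesis
    by (simp add: map_list_coords)
qed

lemma measurable_real_list_apply2:
  assumes f: "measurable_real_list M f" and h: "h \<in> M \<rightarrow>\<^sub>M K"
    and g: "\<And>k. (\<lambda>(v, y). g (map v [0..<k]) y) \<in> PiM UNIV (\<lambda>_. borel) \<Otimes>\<^sub>M K \<rightarrow>\<^sub>M N"
  shows "(\<lambda>w. g (f w) (h w)) \<in> M \<rightarrow>\<^sub>M N"
proof -
  have G: "(\<lambda>(k, v, y). g (map v [0..<k]) y)
      \<in> count_space UNIV \<Otimes>\<^sub>M (PiM UNIV (\<lambda>_. borel) \<Otimes>\<^sub>M K) \<rightarrow>\<^sub>M N"
    by (rule measurable_pair_measure_countable1) (use g in auto)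
  have H: "(\<lambda>w. (fst (list_coords (f w)), snd (list_coords (f w)), h w))
      \<in> M \<rightarrow>\<^sub>M count_space UNIV \<Otimes>\<^sub>M (PiM UNIV (\<lambda>_. borel) \<Otimes>\<^sub>M K)"
    using f h unfolding measurable_real_list_def
    by (intro measurable_Pair measurable_compose[OF _ measurable_fst] measurable_compose[OF _ measurable_snd])
  from measurable_compose[OF H G] show ?thesis
    by (simp add: map_list_coords)
qed

lemma measurable_real_list_length:
  "measurable_real_list M f \<Longrightarrow> (\<lambda>w. length (f w)) \<in> M \<rightarrow>\<^sub>M count_space UNIV"
  unfolding measurable_real_list_def
  by (drule measurable_compose[OF _ measurable_fst]) (simp add: list_coords_def)

lemma pred_real_list_length:
  "measurable_real_list M f \<Longrightarrow> Measurable.pred M (\<lambda>w. P (length (f w)))"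
  using measurable_compose[OF measurable_real_list_length, of M f P "count_space UNIV"] by simp

lemma measurable_real_list_const: "measurable_real_list M (\<lambda>_. xs)"
  unfolding measurable_real_list_def
  by (rule measurable_const) (auto simp: space_pair_measure space_PiM)

lemma measurable_real_list_Cons:
  assumes g: "g \<in> borel_measurable M" and f: "measurable_real_list M f"
  shows "measurable_real_list M (\<lambda>w. g w # f w)"
proof -
  have L: "(\<lambda>w. list_coords (f w)) \<in> M \<rightarrow>\<^sub>M coords_space"
    using f unfolding measurable_real_list_def .
  have "(\<lambda>w. Suc (fst (list_coords (f w)))) \<in> M \<rightarrow>\<^sub>M count_space UNIV"
    using measurable_compose[OF L measurable_fst] by simp
  moreover have "(\<lambda>w. case_nat (g w) (snd (list_coords (f w)))) \<in> M \<rightarrow>\<^sub>M PiM UNIV (\<lambda>_. borel)"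
    by (rule measurable_case_nat'[OF g measurable_compose[OF L measurable_snd]])
  ultimately show ?thesis
    unfolding measurable_real_list_def list_coords_Cons by (rule measurable_Pair)
qed

lemma measurable_real_list_If:
  assumes "Measurable.pred M P" "measurable_real_list M f" "measurable_real_list M g"
  shows "measurable_real_list M (\<lambda>w. if P w then f w else g w)"
  using measurable_If[OF assms(2,3)[unfolded measurable_real_list_def] predE[OF assms(1)]]
  unfolding measurable_real_list_def by (simp add: if_distrib[of list_coords])

lemma measurable_real_list_map:
  assumes "\<And>i. i < k \<Longrightarrow> v i \<in> borel_measurable M"
  shows "measurable_real_list M (\<lambda>w. map (\<lambda>i. v i w) [0..<k])"
proof -
  have "(\<lambda>w. if i < k then v i w else 0) \<in> borel_measurable M" for i
    using assms by (cases "i < k") auto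
  then have "(\<lambda>w. (k, \<lambda>i. if i < k then v i w else 0)) \<in> M \<rightarrow>\<^sub>M coords_space"
    by (intro measurable_Pair measurable_const measurable_PiM_single') (auto simp: space_PiM)
  moreover have "list_coords (map (\<lambda>i. v i w) [0..<k]) = (k, \<lambda>i. if i < k then v i w else 0)" for w
    by (auto simp: list_coords_def fun_eq_iff)
  ultimately show ?thesis
    unfolding measurable_real_list_def by simp
qed

lemma measurable_real_list_lcfs_serve_map:
  assumes "\<And>i. i < k \<Longrightarrow> v i \<in> borel_measurable M" and "a \<in> borel_measurable M"
  shows "measurable_real_list M (\<lambda>w. lcfs_serve (map (\<lambda>i. v i w) [0..<k]) (a w))"
  using assms
proof (induction k arbitrary: v a)
  case 0
  show ?case by (simp add: measurable_real_list_const)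
next
  case (Suc k)
  have [measurable]: "v 0 \<in> borel_measurable M" "a \<in> borel_measurable M"
    using Suc.prems by auto
  have "measurable_real_list M (\<lambda>w. if v 0 w \<le> a w
      then lcfs_serve (map (\<lambda>i. v (Suc i) w) [0..<k]) (a w - v 0 w)
      else (v 0 w - a w) # map (\<lambda>i. v (Suc i) w) [0..<k])"
    using Suc.prems
    by (intro measurable_real_list_If measurable_real_list_Cons measurable_real_list_map Suc.IH)
       auto
  then show ?case
    by (simp del: upt_Suc add: map_upt_Suc)
qed

lemma measurable_real_list_lcfs_serve:
  assumes "measurable_real_list M f" "a \<in> borel_measurable M"
  shows "measurable_real_list M (\<lambda>w. lcfs_serve (f w) (a w))"
  unfolding measurable_real_list_def
proof (rule measurable_real_list_apply2[OF assms, where g = "\<lambda>xs y. list_coords (lcfs_serve xs y)"])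
  fix k
  have "measurable_real_list (PiM UNIV (\<lambda>_. borel) \<Otimes>\<^sub>M borel)
      (\<lambda>p. lcfs_serve (map (\<lambda>i. fst p i) [0..<k]) (snd p))"
    by (rule measurable_real_list_lcfs_serve_map) auto
  then show "(\<lambda>(v, y). list_coords (lcfs_serve (map v [0..<k]) y))
      \<in> PiM UNIV (\<lambda>_. borel) \<Otimes>\<^sub>M borel \<rightarrow>\<^sub>M coords_space"
    by (simp add: measurable_real_list_def case_prod_beta')
qed

section \<open>Sample paths of the LCFS-p-resume stack\<close>

lemma length_lcfs_serve_le: "length (lcfs_serve xs a) \<le> length xs"
  by (induction xs arbitrary: a) (auto intro: le_SucI)

lemma lcfs_serve_nonneg: "list_all (\<lambda>x. 0 \<le> x) xs \<Longrightarrow> list_all (\<lambda>x. 0 \<le> x) (lcfs_serve xs a)"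
  by (induction xs arbitrary: a) auto

lemma lcfs_stack_nonneg:
  "(\<And>k. k \<le> n \<Longrightarrow> 0 \<le> S k) \<Longrightarrow> list_all (\<lambda>x. 0 \<le> x) (lcfs_stack A S n)"
  by (induction n) (auto intro!: lcfs_serve_nonneg)

lemma lcfs_stack_cong:
  "(\<And>k. k < n \<Longrightarrow> A k = A' k) \<Longrightarrow> (\<And>k. k \<le> n \<Longrightarrow> S k = S' k) \<Longrightarrow>
    lcfs_stack A S n = lcfs_stack A' S' n"
  by (induction n) auto

lemma in_busy_period_0 [simp]: "in_busy_period A S 0"
  by (simp add: in_busy_period_def)

lemma in_busy_period_Suc:
  "in_busy_period A S (Suc n) \<longleftrightarrow> in_busy_period A S n \<and> lcfs_serve (lcfs_stack A S n) (A n) \<noteq> []"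
  by (auto simp: in_busy_period_def less_Suc_eq)

lemma busy_max_le_iff:
  "busy_max A S \<le> enat b \<longleftrightarrow> (\<forall>n. in_busy_period A S n \<longrightarrow> length (lcfs_stack A S n) \<le> b)"
  unfolding busy_max_def by (auto simp: SUP_le_iff)

definition within_bound :: "nat \<Rightarrow> (nat \<Rightarrow> real) \<Rightarrow> (nat \<Rightarrow> real) \<Rightarrow> nat \<Rightarrow> bool" where
  "within_bound b A S n \<longleftrightarrow> in_busy_period A S n \<and> (\<forall>k\<le>n. length (lcfs_stack A S k) \<le> b)"

definition ended_within_bound :: "nat \<Rightarrow> (nat \<Rightarrow> real) \<Rightarrow> (nat \<Rightarrow> real) \<Rightarrow> nat \<Rightarrow> bool" where
  "ended_within_bound b A S n \<longleftrightarrow>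
     (\<exists>m<n. within_bound b A S m \<and> lcfs_serve (lcfs_stack A S m) (A m) = [])"

lemma within_bound_0: "within_bound b A S 0 \<longleftrightarrow> 1 \<le> b"
  by (simp add: within_bound_def)

lemma within_bound_Suc:
  "within_bound b A S (Suc n) \<longleftrightarrow>
     within_bound b A S n \<and> lcfs_serve (lcfs_stack A S n) (A n) \<noteq> [] \<and>
     length (lcfs_stack A S (Suc n)) \<le> b"
  by (auto simp: within_bound_def in_busy_period_Suc le_Suc_eq)

lemma within_bound_mono: "within_bound b A S n \<Longrightarrow> k \<le> n \<Longrightarrow> within_bound b A S k"
  by (auto simp: within_bound_def in_busy_period_def)

lemma within_bound_cong:
  assumes "\<And>k. k < n \<Longrightarrow> A k = A' k" "\<And>k. k \<le> n \<Longrightarrow> S k = S' k"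
  shows "within_bound b A S n = within_bound b A' S' n"
proof -
  have "lcfs_stack A S k = lcfs_stack A' S' k" if "k \<le> n" for k
    by (rule lcfs_stack_cong) (use assms that in auto)
  then show ?thesis
    using assms(1) by (auto simp: within_bound_def in_busy_period_def)
qed

lemma not_ended_within_bound_0: "\<not> ended_within_bound b A S 0"
  by (simp add: ended_within_bound_def)

lemma ended_within_bound_Suc:
  "ended_within_bound b A S (Suc n) \<longleftrightarrow>
     ended_within_bound b A S n \<or>
     (within_bound b A S n \<and> lcfs_serve (lcfs_stack A S n) (A n) = [])"
  by (auto simp: ended_within_bound_def less_Suc_eq)

lemma not_within_bound_if_ended: "ended_within_bound b A S n \<Longrightarrow> \<not> within_bound b A S n"
  by (auto simp: ended_within_bound_def within_bound_def in_busy_period_def)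

lemma not_busy_max_le_0: "\<not> busy_max A S \<le> enat 0"
proof -
  have "in_busy_period A S 0 \<and> \<not> length (lcfs_stack A S 0) \<le> 0"
    by simp
  then show ?thesis
    unfolding busy_max_le_iff by blast
qed

lemma busy_max_le_iff_ended_or_within_bound:
  "busy_max A S \<le> enat b \<longleftrightarrow> (\<exists>n. ended_within_bound b A S n) \<or> (\<forall>n. within_bound b A S n)"
proof
  assume "busy_max A S \<le> enat b"
  then have len: "length (lcfs_stack A S n) \<le> b" if "in_busy_period A S n" for n
    using that by (simp add: busy_max_le_iff)
  show "(\<exists>n. ended_within_bound b A S n) \<or> (\<forall>n. within_bound b A S n)"
  proof (cases "\<exists>m. lcfs_serve (lcfs_stack A S m) (A m) = []")
    case True
    then obtain m where empty: "lcfs_serve (lcfs_stack A S m) (A m) = []"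
      and first: "\<forall>k<m. lcfs_serve (lcfs_stack A S k) (A k) \<noteq> []"
      using exists_least_iff[of "\<lambda>m. lcfs_serve (lcfs_stack A S m) (A m) = []"] by blast
    have "in_busy_period A S k" if "k \<le> m" for k
      using first that by (auto simp: in_busy_period_def)
    then have "within_bound b A S m"
      using len by (auto simp: within_bound_def)
    then show ?thesis
      using empty by (auto simp: ended_within_bound_def)
  next
    case False
    then show ?thesis
      using len by (auto simp: within_bound_def in_busy_period_def)
  qed
next
  assume "(\<exists>n. ended_within_bound b A S n) \<or> (\<forall>n. within_bound b A S n)"
  then have "length (lcfs_stack A S n) \<le> b" if "in_busy_period A S n" for n
  proof
    assume "\<exists>n. ended_within_bound b A S n"
    then obtain m where m: "within_bound b A S m" "lcfs_serve (lcfs_stack A S m) (A m) = []"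
      by (auto simp: ended_within_bound_def)
    have "n \<le> m"
      using that m(2) unfolding in_busy_period_def by (meson not_le)
    then show ?thesis
      using m(1) by (auto simp: within_bound_def)
  qed (auto simp: within_bound_def)
  then show "busy_max A S \<le> enat b"
    by (simp add: busy_max_le_iff)
qed

lemma length_lcfs_stack_grows:
  assumes "\<And>j. 1 \<le> j \<Longrightarrow> j \<le> m \<Longrightarrow> A (n + j) < S (n + j)"
  shows "Suc m \<le> length (lcfs_stack A S (n + Suc m))"
  using assms
proof (induction m)
  case (Suc m)
  define k where "k = n + Suc m"
  have "A k < S k"
    using Suc.prems[of "Suc m"] by (simp add: k_def)
  moreover have "Suc m \<le> length (lcfs_stack A S k)"
    unfolding k_def by (rule Suc.IH) (use Suc.prems in auto)
  moreover have "length (lcfs_stack A S (Suc k)) = Suc (length (lcfs_stack A S k))" if "A k < S k"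
    using that by (cases k) auto
  ultimately show ?case
    by (simp add: k_def)
qed simp

lemma not_within_bound_if_grows:
  "(\<And>j. 1 \<le> j \<Longrightarrow> j \<le> b \<Longrightarrow> A (n + j) < S (n + j)) \<Longrightarrow> \<not> within_bound b A S (n + Suc b)"
  using length_lcfs_stack_grows[of b A n S] by (auto simp: within_bound_def)

section \<open>Stack weights\<close>

(* With c j = \<lambda> (1 - Q (b - j)), the rate of the arrivals whose sub-busy period would
   exceed the bound while the customer at level j (counted from the bottom) is served, this
   is the probability of clearing the stack, top first, without exceeding the bound. *)
fun stack_weight :: "(nat \<Rightarrow> real) \<Rightarrow> real list \<Rightarrow> real" where
  "stack_weight c [] = 1"
| "stack_weight c (x # xs) = exp (- c (Suc (length xs)) * x) * stack_weight c xs"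

lemma stack_weight_pos: "0 < stack_weight c xs"
  by (induction xs) auto

lemma stack_weight_le_1:
  "(\<And>j. 0 \<le> c j) \<Longrightarrow> list_all (\<lambda>x. 0 \<le> x) xs \<Longrightarrow> stack_weight c xs \<le> 1"
  by (induction xs) (auto intro!: mult_le_one simp: less_imp_le[OF stack_weight_pos])

lemma stack_weight_map:
  "stack_weight c (map v [0..<k]) = (\<Prod>i<k. exp (- c (k - i) * v i))"
proof (induction k arbitrary: v)
  case (Suc k)
  show ?case
    using Suc.IH[of "\<lambda>i. v (Suc i)"]
    by (simp del: upt_Suc prod.lessThan_Suc add: map_upt_Suc prod.lessThan_Suc_shift)
qed simp

lemma measurable_stack_weight:
  "measurable_real_list M f \<Longrightarrow> (\<lambda>w. stack_weight c (f w)) \<in> borel_measurable M"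
  by (erule measurable_real_list_apply) (simp add: stack_weight_map)

(* The value of the stack ys just before the next arrival, with the service time of that
   arrival integrated out: it enters at level length ys + 1, which contributes the factor
   Q (b - length ys), and Q 0 = 0 when the stack is full. *)
definition pre_arrival_weight :: "(nat \<Rightarrow> real) \<Rightarrow> (nat \<Rightarrow> real) \<Rightarrow> nat \<Rightarrow> real list \<Rightarrow> ennreal" where
  "pre_arrival_weight Q c b ys = (if ys = [] then 1 else ennreal (Q (b - length ys) * stack_weight c ys))"

lemma measurable_pre_arrival_weight:
  "measurable_real_list M f \<Longrightarrow> (\<lambda>w. pre_arrival_weight Q c b (f w)) \<in> borel_measurable M"
proof (erule measurable_real_list_apply)
  fix k
  show "(\<lambda>v. pre_arrival_weight Q c b (map v [0..<k])) \<in> borel_measurable (PiM UNIV (\<lambda>_. borel))"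
    by (cases "k = 0") (simp_all add: pre_arrival_weight_def stack_weight_map)
qed

lemma nn_integral_stack_weight_Cons:
  assumes "sets \<sigma> = sets borel" and Q: "\<And>m. 0 \<le> Q m"
    and rec: "\<And>m. 1 \<le> m \<Longrightarrow> m < b \<Longrightarrow>
      (\<integral>\<^sup>+ s. exp (- lam * (1 - Q (m - 1)) * s) \<partial>\<sigma>) = Q m"
    and c: "\<And>j. c j = lam * (1 - Q (b - j))"
    and "ys \<noteq> []" "length ys < b"
  shows "(\<integral>\<^sup>+ s. stack_weight c (s # ys) \<partial>\<sigma>) = ennreal (Q (b - length ys) * stack_weight c ys)"
proof -
  define m where "m = b - length ys"
  have m: "1 \<le> m" "m < b"
    using assms(5,6) by (auto simp: m_def)
  have "b - Suc (length ys) = m - 1"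
    by (simp add: m_def)
  then have cm: "c (Suc (length ys)) = lam * (1 - Q (m - 1))"
    by (simp add: c)
  have "(\<integral>\<^sup>+ s. stack_weight c (s # ys) \<partial>\<sigma>) =
      (\<integral>\<^sup>+ s. ennreal (stack_weight c ys) * exp (- lam * (1 - Q (m - 1)) * s) \<partial>\<sigma>)"
    by (intro nn_integral_cong) (simp add: cm ennreal_mult'' mult.commute)
  also have "\<dots> = ennreal (stack_weight c ys) * (\<integral>\<^sup>+ s. exp (- lam * (1 - Q (m - 1)) * s) \<partial>\<sigma>)"
    by (simp add: nn_integral_cmult measurable_cong_sets[OF \<open>sets \<sigma> = sets borel\<close> refl])
  also have "\<dots> = ennreal (stack_weight c ys) * Q m"
    by (simp only: rec[OF m])
  also have "\<dots> = ennreal (Q (b - length ys) * stack_weight c ys)"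
    using Q[of m] by (simp add: m_def ennreal_mult'' mult.commute)
  finally show ?thesis .
qed

lemma nn_integral_after_arrival:
  assumes "prob_space \<sigma>" "sets \<sigma> = sets borel"
    and Q: "\<And>m. 0 \<le> Q m" "Q 0 = 0"
    and rec: "\<And>m. 1 \<le> m \<Longrightarrow> m < b \<Longrightarrow>
      (\<integral>\<^sup>+ s. exp (- lam * (1 - Q (m - 1)) * s) \<partial>\<sigma>) = Q m"
    and c: "\<And>j. c j = lam * (1 - Q (b - j))"
    and "length ys \<le> b"
  shows "(\<integral>\<^sup>+ s. (if ys = [] then 1 else if length ys < b then ennreal (stack_weight c (s # ys)) else 0) \<partial>\<sigma>) =
    pre_arrival_weight Q c b ys"
proof -
  consider "ys = []" | "ys \<noteq> []" "length ys < b" | "ys \<noteq> []" "length ys = b"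
    using \<open>length ys \<le> b\<close> by linarith
  then show ?thesis
  proof cases
    case 1
    then show ?thesis
      using prob_space.emeasure_space_1[OF \<open>prob_space \<sigma>\<close>] by (simp add: pre_arrival_weight_def)
  next
    case 2
    then show ?thesis
      using nn_integral_stack_weight_Cons[OF \<open>sets \<sigma> = sets borel\<close> Q(1) rec c]
      by (simp add: pre_arrival_weight_def)
  next
    case 3
    then show ?thesis
      using Q by (simp add: pre_arrival_weight_def)
  qed
qed

lemma nn_integral_exponential_density_shift:
  fixes g :: "real \<Rightarrow> ennreal"
  assumes "0 \<le> lam" "0 \<le> x" and g: "g \<in> borel_measurable borel"
  shows "(\<integral>\<^sup>+ a. indicator {x..} a * (exponential_density lam a * g (a - x)) \<partial>lborel) =
    exp (- lam * x) * (\<integral>\<^sup>+ a. exponential_density lam a * g a \<partial>lborel)"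
proof -
  have "(\<integral>\<^sup>+ a. indicator {x..} a * (exponential_density lam a * g (a - x)) \<partial>lborel) =
      (\<integral>\<^sup>+ a. indicator {x..} (x + a) * (exponential_density lam (x + a) * g a) \<partial>lborel)"
    using g by (subst nn_integral_real_affine[where c = 1 and t = x]) (auto simp: borel_measurable_erlang_density)
  also have "\<dots> = (\<integral>\<^sup>+ a. exp (- lam * x) * (exponential_density lam a * g a) \<partial>lborel)"
  proof (rule nn_integral_cong)
    fix a :: real
    have "indicator {x..} (x + a) * ennreal (exponential_density lam (x + a)) =
        ennreal (exp (- lam * x)) * ennreal (exponential_density lam a)"
      using assms by (auto simp: exponential_density_def indicator_def mult_exp_exp algebra_simps
          simp flip: ennreal_mult)
    then show "indicator {x..} (x + a) * (exponential_density lam (x + a) * g a) =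
        exp (- lam * x) * (exponential_density lam a * g a)"
      by (simp flip: mult.assoc)
  qed
  also have "\<dots> = exp (- lam * x) * (\<integral>\<^sup>+ a. exponential_density lam a * g a \<partial>lborel)"
    using g by (intro nn_integral_cmult) (simp add: borel_measurable_erlang_density)
  finally show ?thesis .
qed

lemma nn_integral_exponential_density_Icc:
  assumes "0 \<le> r" "0 \<le> x"
  shows "(\<integral>\<^sup>+ a. ennreal (r * exp (- r * a)) * indicator {0..x} a \<partial>lborel) = ennreal (1 - exp (- r * x))"
  using assms
  by (subst nn_integral_FTC_Icc[where F = "\<lambda>a. - exp (- r * a)"])
     (auto intro!: derivative_eq_intros simp: algebra_simps)

lemma measurable_pre_arrival_weight_lcfs_serve:
  "(\<lambda>a. pre_arrival_weight Q c b (lcfs_serve xs (a - x))) \<in> borel_measurable borel"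
  by (intro measurable_pre_arrival_weight measurable_real_list_lcfs_serve
      measurable_real_list_const borel_measurable_diff) auto

lemma nn_integral_exponential_density_lessThan:
  assumes lam: "0 < lam" and "0 \<le> q" "0 \<le> H" "0 \<le> x" and C: "C + lam * q = lam"
  shows "(\<integral>\<^sup>+ a. indicator {..<x} a * (exponential_density lam a * ennreal (q * exp (- C * (x - a)) * H))
      \<partial>lborel) = ennreal (H * exp (- C * x)) * ennreal (1 - exp (- lam * q * x))"
proof -
  define r where "r = lam - C"
  have r: "lam * q = r"
    using C by (simp add: r_def)
  have "0 \<le> r"
    using lam \<open>0 \<le> q\<close> by (simp flip: r)
  have "AE a in lborel. indicator {..<x} a * (exponential_density lam a * ennreal (q * exp (- C * (x - a)) * H)) =
      ennreal (H * exp (- C * x)) * (ennreal (r * exp (- r * a)) * indicator {0..x} a)"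
    using AE_lborel_singleton[of x]
  proof eventually_elim
    case (elim a)
    show ?case
    proof (cases "0 \<le> a \<and> a < x")
      case True
      have "exp (- (a * lam)) * exp (- C * (x - a)) = exp (- C * x) * exp (- r * a)"
        by (simp add: mult_exp_exp r_def algebra_simps)
      then have E: "exponential_density lam a * (q * exp (- C * (x - a)) * H) = H * exp (- C * x) * (r * exp (- r * a))"
        using True by (simp add: exponential_density_def algebra_simps flip: r)
      have "indicator {..<x} a * (exponential_density lam a * ennreal (q * exp (- C * (x - a)) * H)) =
          ennreal (exponential_density lam a * (q * exp (- C * (x - a)) * H))"
        using True lam by (simp add: indicator_def exponential_density_def ennreal_mult'[symmetric])
      also have "\<dots> = ennreal (H * exp (- C * x)) * ennreal (r * exp (- r * a))"
        unfolding E using \<open>0 \<le> H\<close> by (simp add: ennreal_mult')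
      finally show ?thesis
        using True by (simp add: indicator_def)
    qed (use elim in \<open>auto simp: indicator_def exponential_density_def\<close>)
  qed
  then have "(\<integral>\<^sup>+ a. indicator {..<x} a * (exponential_density lam a * ennreal (q * exp (- C * (x - a)) * H))
      \<partial>lborel) = ennreal (H * exp (- C * x)) * (\<integral>\<^sup>+ a. ennreal (r * exp (- r * a)) * indicator {0..x} a \<partial>lborel)"
    by (simp add: nn_integral_cong_AE nn_integral_cmult)
  with nn_integral_exponential_density_Icc[OF \<open>0 \<le> r\<close> \<open>0 \<le> x\<close>] show ?thesis
    by (simp add: r)
qed

lemma nn_integral_exponential_density_split:
  fixes g :: "real \<Rightarrow> ennreal"
  assumes lam: "0 < lam" and "0 \<le> q" "0 < H" "0 \<le> x" and C: "C + lam * q = lam"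
    and g: "g \<in> borel_measurable borel" "(\<integral>\<^sup>+ a. exponential_density lam a * g a \<partial>lborel) = H"
  shows "(\<integral>\<^sup>+ a. indicator {..<x} a * (exponential_density lam a * ennreal (q * exp (- C * (x - a)) * H)) +
      indicator {x..} a * (exponential_density lam a * g (a - x)) \<partial>lborel) = ennreal (H * exp (- C * x))"
proof -
  have "(\<integral>\<^sup>+ a. indicator {..<x} a * (exponential_density lam a * ennreal (q * exp (- C * (x - a)) * H)) +
      indicator {x..} a * (exponential_density lam a * g (a - x)) \<partial>lborel) =
      ennreal (H * exp (- C * x)) * ennreal (1 - exp (- lam * q * x)) + ennreal (exp (- lam * x) * H)"
    using nn_integral_exponential_density_lessThan[OF lam \<open>0 \<le> q\<close> _ \<open>0 \<le> x\<close> C, of H]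
      nn_integral_exponential_density_shift[OF _ \<open>0 \<le> x\<close> g(1), of lam] g \<open>0 < H\<close> lam
    by (subst nn_integral_add) (auto simp: borel_measurable_erlang_density ennreal_mult')
  also have "\<dots> = ennreal (H * exp (- C * x) * (1 - exp (- lam * q * x)) + exp (- lam * x) * H)"
  proof -
    have "0 \<le> 1 - exp (- lam * q * x)"
      using \<open>0 \<le> x\<close> \<open>0 \<le> q\<close> lam by simp
    with \<open>0 < H\<close> show ?thesis
      by (simp add: ennreal_mult'[symmetric] ennreal_plus[symmetric] del: ennreal_plus)
  qed
  also have "H * exp (- C * x) * (1 - exp (- lam * q * x)) + exp (- lam * x) * H = H * exp (- C * x)"
  proof -
    have lq: "lam * q = lam - C"
      using C by linarith
    have "exp (- lam * x) = exp (- C * x) * exp (- (lam * q) * x)"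
      unfolding lq by (simp add: mult_exp_exp algebra_simps)
    then show ?thesis
      by (simp add: algebra_simps)
  qed
  finally show ?thesis .
qed

lemma nn_integral_pre_arrival_weight:
  assumes lam: "0 < lam" and Q: "\<And>m. 0 \<le> Q m" "\<And>m. Q m \<le> 1"
    and c: "\<And>j. c j = lam * (1 - Q (b - j))"
  shows "list_all (\<lambda>x. 0 \<le> x) xs \<Longrightarrow> length xs \<le> b \<Longrightarrow>
    (\<integral>\<^sup>+ a. exponential_density lam a * pre_arrival_weight Q c b (lcfs_serve xs a) \<partial>lborel) =
    stack_weight c xs"
proof (induction xs)
  case Nil
  have "(\<integral>\<^sup>+ a. exponential_density lam a \<partial>lborel) = 1"
    using prob_space.emeasure_space_1[OF prob_space_exponential_density[OF lam]]
    by (simp add: emeasure_density borel_measurable_erlang_density)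
  then show ?case
    by (simp add: pre_arrival_weight_def)
next
  case (Cons x zs)
  let ?W = "pre_arrival_weight Q c b"
  define q where "q = Q (b - Suc (length zs))"
  have "0 \<le> q" "c (Suc (length zs)) + lam * q = lam"
    using Q by (auto simp: q_def c algebra_simps)
  have "exponential_density lam a * ?W (lcfs_serve (x # zs) a) =
      indicator {..<x} a * (exponential_density lam a *
        ennreal (q * exp (- c (Suc (length zs)) * (x - a)) * stack_weight c zs)) +
      indicator {x..} a * (exponential_density lam a * ?W (lcfs_serve zs (a - x)))" for a
    by (cases "x \<le> a") (auto simp: indicator_def pre_arrival_weight_def q_def mult.assoc)
  then show ?case
    using nn_integral_exponential_density_split[OF lam \<open>0 \<le> q\<close> stack_weight_pos[of c zs] _
        \<open>c (Suc (length zs)) + lam * q = lam\<close>, where x = x and g = "\<lambda>a. ?W (lcfs_serve zs a)"]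
      measurable_pre_arrival_weight_lcfs_serve[of Q c b zs 0] Cons
    by (simp add: mult.commute)
qed

section \<open>Product measures and independence\<close>

lemma measurable_fun_upd_PiM_UNIV:
  "(\<lambda>(X, x). X(i := x)) \<in> PiM UNIV M \<Otimes>\<^sub>M M i \<rightarrow>\<^sub>M PiM UNIV M"
  using measurable_add_dim[of i UNIV M] by simp

lemma borel_measurable_nn_integral_fun_upd:
  assumes "sigma_finite_measure (M i)" and f: "f \<in> borel_measurable (PiM UNIV M)"
  shows "(\<lambda>X. \<integral>\<^sup>+ x. f (X(i := x)) \<partial>M i) \<in> borel_measurable (PiM UNIV M)"
  using sigma_finite_measure.borel_measurable_nn_integral_fst[OF assms(1)
      measurable_compose[OF measurable_fun_upd_PiM_UNIV f]]
  by simp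

lemma nn_integral_PiM_fun_upd:
  fixes M :: "'i \<Rightarrow> 'a measure"
  assumes M: "\<And>i. prob_space (M i)" and f: "f \<in> borel_measurable (PiM UNIV M)"
  shows "(\<integral>\<^sup>+ X. f X \<partial>PiM UNIV M) = (\<integral>\<^sup>+ X. \<integral>\<^sup>+ x. f (X(i := x)) \<partial>M i \<partial>PiM UNIV M)"
proof -
  interpret pair_sigma_finite "M i" "PiM UNIV M"
    using M by (intro pair_sigma_finite.intro prob_space_imp_sigma_finite prob_space_PiM) auto
  have upd: "(\<lambda>(x, X). X(i := x)) \<in> M i \<Otimes>\<^sub>M PiM UNIV M \<rightarrow>\<^sub>M PiM UNIV M"
    unfolding case_prod_beta' by (rule measurable_fun_upd[where J = UNIV]) auto
  have "PiM UNIV M = distr (M i \<Otimes>\<^sub>M PiM UNIV M) (PiM UNIV M) (\<lambda>(x, X). X(i := x))"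
    using distr_pair_PiM_eq_PiM[of UNIV M i] M by simp
  then have "(\<integral>\<^sup>+ X. f X \<partial>PiM UNIV M) = (\<integral>\<^sup>+ (x, X). f (X(i := x)) \<partial>(M i \<Otimes>\<^sub>M PiM UNIV M))"
    using nn_integral_distr[OF upd, of f] f by (simp add: case_prod_beta')
  also have "\<dots> = (\<integral>\<^sup>+ X. \<integral>\<^sup>+ x. f (X(i := x)) \<partial>M i \<partial>PiM UNIV M)"
    using nn_integral_snd[OF measurable_compose[OF upd f]] by (simp add: case_prod_beta')
  finally show ?thesis .
qed

lemma measurable_id_PiM_UNIV:
  "(\<lambda>x. x) \<in> PiM K (\<lambda>_. borel) \<rightarrow>\<^sub>M (PiM UNIV (\<lambda>_. borel) :: ('i \<Rightarrow> 'a::topological_space) measure)"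
proof (rule measurable_PiM_single')
  fix i :: 'i
  show "(\<lambda>x. x i) \<in> borel_measurable (PiM K (\<lambda>_. borel :: 'a measure))"
  proof (cases "i \<in> K")
    case False
    have "x i = undefined" if "x \<in> space (PiM K (\<lambda>_. borel :: 'a measure))" for x
      using that False by (auto simp: space_PiM PiE_def extensional_def)
    then show ?thesis
      using measurable_cong[of "PiM K (\<lambda>_. borel :: 'a measure)" "\<lambda>x. x i" "\<lambda>x. undefined"] by simp
  qed simp
qed simp

lemma emeasure_Collect_eq_nn_integral:
  assumes "{w \<in> space M. P w} \<in> sets M"
  shows "emeasure M {w \<in> space M. P w} = (\<integral>\<^sup>+ w. (if P w then 1 else 0) \<partial>M)"
  by (subst nn_integral_indicator[OF assms, symmetric]) (auto intro!: nn_integral_cong simp: indicator_def)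

context prob_space
begin

lemma prob_indep_var_Int:
  assumes "indep_var Ma X Mb Y" "SA \<in> sets Ma" "SB \<in> sets Mb"
  shows "prob ((X -` SA \<inter> space M) \<inter> (Y -` SB \<inter> space M)) =
    prob (X -` SA \<inter> space M) * prob (Y -` SB \<inter> space M)"
proof -
  have "prob (\<Inter>i\<in>UNIV. case_bool X Y i -` case_bool SA SB i \<inter> space M) =
      (\<Prod>i\<in>UNIV. prob (case_bool X Y i -` case_bool SA SB i \<inter> space M))"
    using assms by (intro indep_varsD[OF assms(1)[unfolded indep_var_def]]) (auto split: bool.split)
  then show ?thesis
    by (simp add: UNIV_bool Int_commute mult.commute)
qed

lemma prob_pos_eq_0:
  fixes X :: "'a \<Rightarrow> real"
  assumes "X \<in> borel_measurable M" "\<And>u. 0 < u \<Longrightarrow> prob {w \<in> space M. u < X w} = 0"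
  shows "prob {w \<in> space M. 0 < X w} = 0"
proof -
  have "0 < X w \<longleftrightarrow> (\<exists>k. inverse (Suc k) < X w)" for w
    using reals_Archimedean[of "X w"] by (auto intro: less_trans[rotated])
  then have "{w \<in> space M. 0 < X w} = (\<Union>k. {w \<in> space M. inverse (Suc k) < X w})"
    by auto
  also have "\<dots> \<in> null_sets M"
    using assms by (intro null_sets_UN null_setsI) (auto simp: emeasure_eq_measure)
  finally show ?thesis
    by (simp add: measure_def null_setsD1)
qed

end

section \<open>The success value\<close>

(* With the rates c of stack_weight: the conditional probability, given the history up to
   the arrival of customer n, that the busy period ends without exceeding b customers. *)
definition success_value ::
    "nat \<Rightarrow> (nat \<Rightarrow> real) \<Rightarrow> (nat \<Rightarrow> real) \<Rightarrow> (nat \<Rightarrow> real) \<Rightarrow> nat \<Rightarrow> ennreal" where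
  "success_value b c A S n =
     (if ended_within_bound b A S n then 1 else 0) +
     (if within_bound b A S n then ennreal (stack_weight c (lcfs_stack A S n)) else 0)"

lemma success_value_Suc:
  "success_value b c A S (Suc n) =
     (if ended_within_bound b A S n then 1 else 0) +
     (if within_bound b A S n then success_value b c A S (Suc n) else 0)"
  using not_within_bound_if_ended[of b A S n]
  by (auto simp: success_value_def ended_within_bound_Suc within_bound_Suc)

lemma success_value_after_arrival:
  assumes "within_bound b A S n"
  shows "success_value b c (A(n := a)) (S(Suc n := s)) (Suc n) =
    (let ys = lcfs_serve (lcfs_stack A S n) a in
     if ys = [] then 1 else if length ys < b then ennreal (stack_weight c (s # ys)) else 0)"
proof -
  let ?A = "A(n := a)" and ?S = "S(Suc n := s)"
  have stack: "lcfs_stack ?A ?S n = lcfs_stack A S n"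
    by (rule lcfs_stack_cong) auto
  have within: "within_bound b ?A ?S n"
    using assms within_bound_cong[of n ?A A ?S S b] by auto
  have "\<not> ended_within_bound b ?A ?S n"
    using not_within_bound_if_ended within by blast
  then show ?thesis
    using within by (simp add: success_value_def ended_within_bound_Suc within_bound_Suc stack Let_def)
qed

lemma ended_le_success_value:
  "(if ended_within_bound b A S n then 1 else 0) \<le> success_value b c A S n"
  by (simp add: success_value_def)

lemma success_value_le:
  assumes "\<And>j. 0 \<le> c j" "\<And>k. 0 \<le> S k"
  shows "success_value b c A S n \<le>
    (if ended_within_bound b A S n then 1 else 0) + (if within_bound b A S n then 1 else 0)"
proof -
  have "stack_weight c (lcfs_stack A S n) \<le> 1"
    using assms by (intro stack_weight_le_1 lcfs_stack_nonneg)
  then show ?thesis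
    by (simp add: success_value_def)
qed

section \<open>The probabilistic model\<close>

definition arrivals :: "(nat + nat \<Rightarrow> real) \<Rightarrow> nat \<Rightarrow> real" where
  "arrivals z = (\<lambda>k. z (Inl k))"

definition services :: "(nat + nat \<Rightarrow> real) \<Rightarrow> nat \<Rightarrow> real" where
  "services z = (\<lambda>k. z (Inr k))"

lemma arrivals_fun_upd [simp]:
  "arrivals (z(Inl n := a)) = (arrivals z)(n := a)" "arrivals (z(Inr n := s)) = arrivals z"
  by (auto simp: arrivals_def)

lemma services_fun_upd [simp]:
  "services (z(Inl n := a)) = services z" "services (z(Inr n := s)) = (services z)(n := s)"
  by (auto simp: services_def)

abbreviation path_space :: "(nat + nat \<Rightarrow> real) measure" where
  "path_space \<equiv> PiM UNIV (\<lambda>_. borel)"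

lemma measurable_arrivals [measurable]: "(\<lambda>z. arrivals z n) \<in> borel_measurable path_space"
  unfolding arrivals_def by simp

lemma measurable_services [measurable]: "(\<lambda>z. services z n) \<in> borel_measurable path_space"
  unfolding services_def by simp

lemma measurable_real_list_lcfs_stack:
  "measurable_real_list path_space (\<lambda>z. lcfs_stack (arrivals z) (services z) n)"
  by (induction n)
     (auto intro!: measurable_real_list_Cons measurable_real_list_lcfs_serve measurable_real_list_const)

lemma pred_lcfs_serve_Nil:
  "Measurable.pred path_space (\<lambda>z. lcfs_serve (lcfs_stack (arrivals z) (services z) n) (arrivals z n) = [])"
  using pred_real_list_length[of path_space, where P = "\<lambda>k. k = 0"]
    measurable_real_list_lcfs_serve[OF measurable_real_list_lcfs_stack measurable_arrivals]
  by simp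

lemma pred_in_busy_period:
  "Measurable.pred path_space (\<lambda>z. in_busy_period (arrivals z) (services z) n)"
  unfolding in_busy_period_def lessThan_iff[symmetric] Ball_def[symmetric]
  by (intro pred_intros_finite pred_intros_logic pred_lcfs_serve_Nil finite_lessThan)

lemma pred_within_bound:
  "Measurable.pred path_space (\<lambda>z. within_bound b (arrivals z) (services z) n)"
  unfolding within_bound_def atMost_iff[symmetric] Ball_def[symmetric]
  by (intro pred_intros_finite pred_intros_logic pred_in_busy_period finite_atMost
      pred_real_list_length measurable_real_list_lcfs_stack)

lemma pred_ended_within_bound:
  "Measurable.pred path_space (\<lambda>z. ended_within_bound b (arrivals z) (services z) n)"
  unfolding ended_within_bound_def lessThan_iff[symmetric] Bex_def[symmetric]
  by (intro pred_intros_finite pred_intros_logic pred_within_bound pred_lcfs_serve_Nil finite_lessThan)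

lemma measurable_success_value:
  "(\<lambda>z. success_value b c (arrivals z) (services z) n) \<in> borel_measurable path_space"
  unfolding success_value_def
  by (intro borel_measurable_add measurable_If predE pred_within_bound pred_ended_within_bound
      measurable_compose[OF measurable_stack_weight[OF measurable_real_list_lcfs_stack] measurable_ennreal]
      borel_measurable_const)

locale lcfs_queue = prob_space Pr for Pr :: "'w measure" +
  fixes lam :: real and A S :: "nat \<Rightarrow> 'w \<Rightarrow> real"
  assumes lam_pos: "0 < lam"
    and indep: "indep_vars (\<lambda>_. borel) (\<lambda>i. case i of Inl n \<Rightarrow> A n | Inr n \<Rightarrow> S n) UNIV"
    and arr: "\<And>n. distributed Pr lborel (A n) (exponential_density lam)"
    and S_ident: "\<And>n. distr Pr borel (S n) = distr Pr borel (S 0)"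
    and S_nonneg: "\<And>n. AE w in Pr. 0 \<le> S n w"
begin

definition sample_path :: "'w \<Rightarrow> nat + nat \<Rightarrow> real" where
  "sample_path w = (\<lambda>i. case i of Inl n \<Rightarrow> A n w | Inr n \<Rightarrow> S n w)"

lemma arrivals_path [simp]: "arrivals (sample_path w) = (\<lambda>n. A n w)"
  and services_path [simp]: "services (sample_path w) = (\<lambda>n. S n w)"
  by (simp_all add: arrivals_def services_def sample_path_def)

lemma indep_sample_path: "indep_vars (\<lambda>_. borel) (\<lambda>i w. sample_path w i) UNIV"
proof -
  have "(\<lambda>i w. sample_path w i) = (\<lambda>i. case i of Inl n \<Rightarrow> A n | Inr n \<Rightarrow> S n)"
    by (auto simp: fun_eq_iff sample_path_def split: sum.split)
  then show ?thesis
    using indep by simp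
qed

lemma measurable_sample_path_component [measurable]: "(\<lambda>w. sample_path w i) \<in> borel_measurable Pr"
  using indep_sample_path by (auto simp: indep_vars_def)

lemma measurable_A [measurable]: "A n \<in> borel_measurable Pr"
  using measurable_sample_path_component[of "Inl n"] by (simp add: sample_path_def)

lemma measurable_S [measurable]: "S n \<in> borel_measurable Pr"
  using measurable_sample_path_component[of "Inr n"] by (simp add: sample_path_def)

lemma measurable_sample_path: "sample_path \<in> Pr \<rightarrow>\<^sub>M path_space"
  by (rule measurable_PiM_single') simp_all

lemma AE_S_nonneg: "AE w in Pr. \<forall>k. 0 \<le> S k w"
  using S_nonneg by (simp add: AE_all_countable)

(* The sample path has the product of its marginals as law, so the two coordinates
   revealed by the next arrival can be integrated out one at a time. *)
lemma nn_integral_resample_next_arrival: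
  assumes Phi: "Phi \<in> borel_measurable path_space"
  shows "(\<integral>\<^sup>+ w. Phi (sample_path w) \<partial>Pr) =
    (\<integral>\<^sup>+ w. \<integral>\<^sup>+ a. \<integral>\<^sup>+ s. Phi ((sample_path w)(Inl n := a, Inr (Suc n) := s))
       \<partial>distr Pr borel (S 0) \<partial>distr Pr borel (A n) \<partial>Pr)"
proof -
  let ?\<mu> = "\<lambda>i. distr Pr borel (\<lambda>w. sample_path w i)"
  have \<mu>: "prob_space (?\<mu> i)" for i
    by (simp add: prob_space_distr)
  have meas_eq: "borel_measurable (PiM UNIV ?\<mu>) = borel_measurable path_space"
    by (intro measurable_cong_sets sets_PiM_cong) simp_all
  have distr_path: "distr Pr path_space sample_path = PiM UNIV ?\<mu>"
    using indep_vars_iff_distr_eq_PiM[where I = UNIV and M' = "\<lambda>_. borel" and X = "\<lambda>i w. sample_path w i"] indep_sample_path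
    by (simp add: restrict_UNIV)
  have \<mu>_A: "?\<mu> (Inl n) = distr Pr borel (A n)" and \<mu>_S: "?\<mu> (Inr (Suc n)) = distr Pr borel (S 0)"
    using S_ident[of "Suc n"] by (simp_all add: sample_path_def)
  define G where "G z = (\<integral>\<^sup>+ s. Phi (z(Inr (Suc n) := s)) \<partial>?\<mu> (Inr (Suc n)))" for z
  define H where "H z = (\<integral>\<^sup>+ a. G (z(Inl n := a)) \<partial>?\<mu> (Inl n))" for z
  have G: "G \<in> borel_measurable path_space"
    using Phi unfolding G_def meas_eq[symmetric]
    by (intro borel_measurable_nn_integral_fun_upd prob_space_imp_sigma_finite \<mu>)
  have H: "H \<in> borel_measurable path_space"
    using G unfolding H_def meas_eq[symmetric]
    by (intro borel_measurable_nn_integral_fun_upd prob_space_imp_sigma_finite \<mu>)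
  have "(\<integral>\<^sup>+ w. Phi (sample_path w) \<partial>Pr) = (\<integral>\<^sup>+ z. Phi z \<partial>PiM UNIV ?\<mu>)"
    using nn_integral_distr[OF measurable_sample_path, of Phi] Phi meas_eq by (simp add: distr_path)
  also have "\<dots> = (\<integral>\<^sup>+ z. G z \<partial>PiM UNIV ?\<mu>)"
    using Phi unfolding G_def meas_eq[symmetric] by (rule nn_integral_PiM_fun_upd[OF \<mu>])
  also have "\<dots> = (\<integral>\<^sup>+ z. H z \<partial>PiM UNIV ?\<mu>)"
    using G unfolding H_def meas_eq[symmetric] by (rule nn_integral_PiM_fun_upd[OF \<mu>])
  also have "\<dots> = (\<integral>\<^sup>+ w. H (sample_path w) \<partial>Pr)"
    using nn_integral_distr[OF measurable_sample_path, of H] H meas_eq by (simp add: distr_path)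
  finally show ?thesis
    by (simp add: H_def G_def \<mu>_A \<mu>_S)
qed

lemma nn_integral_distr_arrival:
  fixes g :: "real \<Rightarrow> ennreal"
  assumes "g \<in> borel_measurable borel"
  shows "(\<integral>\<^sup>+ a. g a \<partial>distr Pr borel (A n)) = (\<integral>\<^sup>+ a. exponential_density lam a * g a \<partial>lborel)"
proof -
  have "distr Pr borel (A n) = density lborel (exponential_density lam)"
  proof -
    have "distr Pr borel (A n) = distr Pr lborel (A n)"
      by (rule distr_cong) simp_all
    then show ?thesis
      using arr[of n] by (simp add: distributed_def)
  qed
  with assms show ?thesis
    by (simp add: nn_integral_density borel_measurable_erlang_density)
qed

lemma measurable_sample_path_compose:
  assumes "(\<lambda>z. F (arrivals z) (services z)) \<in> path_space \<rightarrow>\<^sub>M N"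
  shows "(\<lambda>w. F (\<lambda>k. A k w) (\<lambda>k. S k w)) \<in> Pr \<rightarrow>\<^sub>M N"
  using measurable_compose[OF measurable_sample_path assms] by simp

lemma pred_within_bound_path [measurable]:
  "Measurable.pred Pr (\<lambda>w. within_bound b (\<lambda>k. A k w) (\<lambda>k. S k w) n)"
  by (rule measurable_sample_path_compose[OF pred_within_bound])

lemma pred_ended_within_bound_path [measurable]:
  "Measurable.pred Pr (\<lambda>w. ended_within_bound b (\<lambda>k. A k w) (\<lambda>k. S k w) n)"
  by (rule measurable_sample_path_compose[OF pred_ended_within_bound])

lemma measurable_success_value_path [measurable]:
  "(\<lambda>w. success_value b c (\<lambda>k. A k w) (\<lambda>k. S k w) n) \<in> borel_measurable Pr"
  by (rule measurable_sample_path_compose[OF measurable_success_value])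

lemma prob_service_greater: "prob {w \<in> space Pr. u < S j w} = prob {w \<in> space Pr. u < S 0 w}"
proof -
  have eq: "prob {w \<in> space Pr. u < S j w} = measure (distr Pr borel (S j)) {u<..}" for j
    by (subst measure_distr) (auto intro!: arg_cong[where f = prob])
  show ?thesis
    unfolding eq S_ident[of j] ..
qed

lemma prob_arrival_le: "0 \<le> u \<Longrightarrow> prob {w \<in> space Pr. A j w \<le> u} = 1 - exp (- u * lam)"
  using exponential_distributedD_le[OF arr _ lam_pos] by simp

lemma prob_growth_block:
  assumes "1 \<le> b" "0 \<le> u"
  shows "prob {w \<in> space Pr. \<forall>j\<in>{Suc n..n + b}. u < S j w \<and> A j w \<le> u} =
    (prob {w \<in> space Pr. u < S 0 w} * (1 - exp (- u * lam))) ^ b"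
proof -
  define J where "J = {Suc n..n + b}"
  define L where "L = Inl ` J \<union> Inr ` J"
  define B where "B i = (case i of Inl _ \<Rightarrow> {..u} | Inr _ \<Rightarrow> {u<..})" for i :: "nat + nat"
  have "J \<noteq> {}" "finite J" "card J = b"
    using assms by (auto simp: J_def)
  have coord: "(\<lambda>w. sample_path w (Inl j)) -` B (Inl j) \<inter> space Pr = {w \<in> space Pr. A j w \<le> u}"
    "(\<lambda>w. sample_path w (Inr j)) -` B (Inr j) \<inter> space Pr = {w \<in> space Pr. u < S j w}" for j
    by (auto simp: B_def sample_path_def)
  have "{w \<in> space Pr. \<forall>j\<in>J. u < S j w \<and> A j w \<le> u} =
      (\<Inter>j\<in>J. {w \<in> space Pr. A j w \<le> u}) \<inter> (\<Inter>j\<in>J. {w \<in> space Pr. u < S j w})"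
    using \<open>J \<noteq> {}\<close> by auto
  also have "\<dots> = (\<Inter>i\<in>L. (\<lambda>w. sample_path w i) -` B i \<inter> space Pr)"
    unfolding L_def INT_Un by (simp add: image_image coord)
  also have "prob \<dots> = (\<Prod>i\<in>L. prob ((\<lambda>w. sample_path w i) -` B i \<inter> space Pr))"
    using \<open>J \<noteq> {}\<close> \<open>finite J\<close>
    by (intro indep_varsD[OF indep_sample_path]) (auto simp: L_def B_def split: sum.split)
  also have "\<dots> = (\<Prod>j\<in>J. prob {w \<in> space Pr. A j w \<le> u}) * (\<Prod>j\<in>J. prob {w \<in> space Pr. u < S j w})"
    unfolding L_def using \<open>finite J\<close>
    by (subst prod.union_disjoint) (auto simp: prod.reindex coord)
  also have "\<dots> = (\<Prod>j\<in>J. 1 - exp (- u * lam)) * (\<Prod>j\<in>J. prob {w \<in> space Pr. u < S 0 w})"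
    by (intro arg_cong2[where f = "(*)"] prod.cong refl prob_arrival_le[OF assms(2)] prob_service_greater)
  also have "\<dots> = (prob {w \<in> space Pr. u < S 0 w} * (1 - exp (- u * lam))) ^ b"
    using \<open>card J = b\<close> by (simp add: power_mult_distrib)
  finally show ?thesis
    by (simp add: J_def)
qed

lemma pred_growth [measurable]:
  "Measurable.pred Pr (\<lambda>w. \<forall>j\<in>{Suc n..n + m}. u < S j w \<and> A j w \<le> u)"
  by (intro pred_intros_finite finite_atLeastAtMost) measurable

lemma prob_within_bound_Int_growth:
  "prob ({w \<in> space Pr. within_bound b (\<lambda>k. A k w) (\<lambda>k. S k w) n} \<inter>
      {w \<in> space Pr. \<forall>j\<in>{Suc n..n + m}. u < S j w \<and> A j w \<le> u}) =
    prob {w \<in> space Pr. within_bound b (\<lambda>k. A k w) (\<lambda>k. S k w) n} *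
    prob {w \<in> space Pr. \<forall>j\<in>{Suc n..n + m}. u < S j w \<and> A j w \<le> u}"
proof -
  define J where "J = {Suc n..n + m}"
  define K where "K = Inl ` {..<n} \<union> Inr ` {..n}"
  define L where "L = Inl ` J \<union> Inr ` J"
  define SK where "SK = {x \<in> space (PiM K (\<lambda>_. borel)). within_bound b (arrivals x) (services x) n}"
  define SL where "SL = {y \<in> space (PiM L (\<lambda>_. borel)). \<forall>j\<in>J. u < y (Inr j) \<and> y (Inl j) \<le> (u::real)}"
  have ind: "indep_var (PiM K (\<lambda>_. borel)) (\<lambda>w. restrict (sample_path w) K)
      (PiM L (\<lambda>_. borel)) (\<lambda>w. restrict (sample_path w) L)"
  proof (rule indep_var_restrict[OF indep_sample_path])
    show "K \<inter> L = {}"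
      by (auto simp: K_def L_def J_def)
  qed simp_all
  have SK: "SK \<in> sets (PiM K (\<lambda>_. borel))"
    unfolding SK_def by (rule predE[OF measurable_compose[OF measurable_id_PiM_UNIV pred_within_bound]])
  have "Measurable.pred path_space (\<lambda>y. \<forall>j\<in>J. u < y (Inr j) \<and> y (Inl j) \<le> u)"
    unfolding J_def by measurable
  then have SL: "SL \<in> sets (PiM L (\<lambda>_. borel))"
    unfolding SL_def by (rule predE[OF measurable_compose[OF measurable_id_PiM_UNIV]])
  have "within_bound b (arrivals (restrict (sample_path w) K)) (services (restrict (sample_path w) K)) n =
      within_bound b (\<lambda>k. A k w) (\<lambda>k. S k w) n" for w
    by (rule within_bound_cong) (auto simp: K_def arrivals_def services_def sample_path_def)
  then have "{w \<in> space Pr. within_bound b (\<lambda>k. A k w) (\<lambda>k. S k w) n} =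
      (\<lambda>w. restrict (sample_path w) K) -` SK \<inter> space Pr"
    by (auto simp: SK_def space_PiM)
  moreover have "{w \<in> space Pr. \<forall>j\<in>J. u < S j w \<and> A j w \<le> u} =
      (\<lambda>w. restrict (sample_path w) L) -` SL \<inter> space Pr"
    by (auto simp: SL_def L_def space_PiM sample_path_def)
  ultimately show ?thesis
    using prob_indep_var_Int[OF ind SK SL] by (simp add: J_def)
qed

lemma prob_within_bound_block:
  assumes "1 \<le> b" "0 \<le> u"
  shows "prob {w \<in> space Pr. within_bound b (\<lambda>k. A k w) (\<lambda>k. S k w) (n + Suc b)} \<le>
    (1 - (prob {w \<in> space Pr. u < S 0 w} * (1 - exp (- u * lam))) ^ b) *
    prob {w \<in> space Pr. within_bound b (\<lambda>k. A k w) (\<lambda>k. S k w) n}"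
proof -
  define running where "running m = {w \<in> space Pr. within_bound b (\<lambda>k. A k w) (\<lambda>k. S k w) m}" for m
  define growth where "growth = {w \<in> space Pr. \<forall>j\<in>{Suc n..n + b}. u < S j w \<and> A j w \<le> u}"
  have [measurable]: "running m \<in> events" "growth \<in> events" for m
    unfolding running_def growth_def by measurable
  have "running (n + Suc b) \<subseteq> running n - growth"
  proof
    fix w
    assume w: "w \<in> running (n + Suc b)"
    have "w \<notin> growth"
    proof
      assume "w \<in> growth"
      then have "A (n + j) w < S (n + j) w" if "1 \<le> j" "j \<le> b" for j
        using that by (auto simp: growth_def dest!: bspec[of _ _ "n + j"])
      then show False
        using w not_within_bound_if_grows[of b "\<lambda>k. A k w" n "\<lambda>k. S k w"] by (auto simp: running_def)
    qed
    with w show "w \<in> running n - growth"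
      by (auto simp: running_def intro: within_bound_mono)
  qed
  then have "prob (running (n + Suc b)) \<le> prob (running n - growth)"
    by (intro finite_measure_mono) auto
  also have "\<dots> = prob (running n) - prob (running n \<inter> growth)"
    by (rule finite_measure_Diff') measurable
  also have "\<dots> = (1 - prob growth) * prob (running n)"
    using prob_within_bound_Int_growth[of b n b u] by (simp add: running_def growth_def algebra_simps)
  finally show ?thesis
    using prob_growth_block[OF assms, of n] by (simp add: running_def growth_def)
qed

lemma prob_within_bound_forever_if_long_services:
  assumes "1 \<le> b" "0 < u" "0 < prob {w \<in> space Pr. u < S 0 w}"
  shows "prob {w \<in> space Pr. \<forall>n. within_bound b (\<lambda>k. A k w) (\<lambda>k. S k w) n} = 0"
proof -
  define p where "p = prob {w \<in> space Pr. u < S 0 w} * (1 - exp (- u * lam))"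
  have "exp (- u * lam) < 1"
    using \<open>0 < u\<close> lam_pos by simp
  then have "0 < p" "p \<le> 1"
    using assms(3) prob_le_1 unfolding p_def by (auto intro: mult_le_one)
  then have "0 < p ^ b" "p ^ b \<le> 1"
    by (simp_all add: power_le_one)
  define running where "running m = {w \<in> space Pr. within_bound b (\<lambda>k. A k w) (\<lambda>k. S k w) m}" for m
  have decay: "prob (running (m * Suc b)) \<le> (1 - p ^ b) ^ m" for m
  proof (induction m)
    case (Suc m)
    have "prob (running (m * Suc b + Suc b)) \<le> (1 - p ^ b) * prob (running (m * Suc b))"
      unfolding running_def p_def by (rule prob_within_bound_block[OF assms(1) less_imp_le[OF \<open>0 < u\<close>]])
    also have "\<dots> \<le> (1 - p ^ b) * (1 - p ^ b) ^ m"
      using Suc.IH \<open>p ^ b \<le> 1\<close> by (intro mult_left_mono) auto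
    finally show ?case
      by (simp add: ac_simps)
  qed simp
  have "prob {w \<in> space Pr. \<forall>n. within_bound b (\<lambda>k. A k w) (\<lambda>k. S k w) n} \<le> prob (running m)" for m
    unfolding running_def by (rule finite_measure_mono) (auto, measurable)
  then have bound: "prob {w \<in> space Pr. \<forall>n. within_bound b (\<lambda>k. A k w) (\<lambda>k. S k w) n} \<le> (1 - p ^ b) ^ m" for m
    using decay[of m] order_trans by blast
  have "(\<lambda>m. (1 - p ^ b) ^ m) \<longlonglongrightarrow> 0"
    using \<open>0 < p ^ b\<close> \<open>p ^ b \<le> 1\<close> by (intro LIMSEQ_power_zero) simp
  then have "prob {w \<in> space Pr. \<forall>n. within_bound b (\<lambda>k. A k w) (\<lambda>k. S k w) n} \<le> 0"
    by (rule LIMSEQ_le_const) (use bound in blast)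
  then show ?thesis
    using measure_nonneg by (rule antisym)
qed

lemma prob_within_bound_forever_if_short_services:
  assumes "\<And>u. 0 < u \<Longrightarrow> prob {w \<in> space Pr. u < S 0 w} = 0"
  shows "prob {w \<in> space Pr. \<forall>n. within_bound b (\<lambda>k. A k w) (\<lambda>k. S k w) n} = 0"
proof -
  have S_null: "prob {w \<in> space Pr. 0 < S 0 w} = 0"
    using assms by (intro prob_pos_eq_0) auto
  have A_null: "prob {w \<in> space Pr. A 0 w \<le> 0} = 0"
    using prob_arrival_le[of 0 0] by simp
  have "{w \<in> space Pr. \<forall>n. within_bound b (\<lambda>k. A k w) (\<lambda>k. S k w) n} \<subseteq>
      {w \<in> space Pr. A 0 w \<le> 0} \<union> {w \<in> space Pr. 0 < S 0 w}"
  proof safe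
    fix w
    assume "\<forall>n. within_bound b (\<lambda>k. A k w) (\<lambda>k. S k w) n" "\<not> 0 < S 0 w"
    then have "within_bound b (\<lambda>k. A k w) (\<lambda>k. S k w) (Suc 0)" "S 0 w \<le> 0"
      by auto
    then have "lcfs_serve [S 0 w] (A 0 w) \<noteq> []" "S 0 w \<le> 0"
      by (auto simp: within_bound_Suc)
    then show "A 0 w \<le> 0"
      by (auto split: if_splits)
  qed
  then have "prob {w \<in> space Pr. \<forall>n. within_bound b (\<lambda>k. A k w) (\<lambda>k. S k w) n} \<le>
      prob ({w \<in> space Pr. A 0 w \<le> 0} \<union> {w \<in> space Pr. 0 < S 0 w})"
    by (intro finite_measure_mono) measurable
  also have "\<dots> \<le> prob {w \<in> space Pr. A 0 w \<le> 0} + prob {w \<in> space Pr. 0 < S 0 w}"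
    by (intro measure_Un_le) measurable
  finally show ?thesis
    using measure_nonneg by (simp add: S_null A_null antisym)
qed

lemma prob_within_bound_forever:
  assumes "1 \<le> b"
  shows "prob {w \<in> space Pr. \<forall>n. within_bound b (\<lambda>k. A k w) (\<lambda>k. S k w) n} = 0"
proof (cases "\<exists>u>0. 0 < prob {w \<in> space Pr. u < S 0 w}")
  case True
  then show ?thesis
    using prob_within_bound_forever_if_long_services[OF assms] by blast
next
  case False
  then show ?thesis
    using measure_nonneg[of Pr]
    by (intro prob_within_bound_forever_if_short_services) (meson antisym not_le)
qed

end

section \<open>The recursion\<close>

(* Q stands for the already established values P(M \<le> m), m < b. *)
locale lcfs_queue_level = lcfs_queue +
  fixes Q :: "nat \<Rightarrow> real" and b :: nat
  assumes b_pos: "1 \<le> b"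
    and Q_nonneg: "\<And>m. 0 \<le> Q m" and Q_le_1: "\<And>m. Q m \<le> 1" and Q_0: "Q 0 = 0"
    and Q_rec: "\<And>m. 1 \<le> m \<Longrightarrow> m < b \<Longrightarrow>
      Q m = (\<integral>\<^sup>+ w. exp (- lam * (1 - Q (m - 1)) * S 0 w) \<partial>Pr)"
begin

definition rate :: "nat \<Rightarrow> real" where
  "rate j = lam * (1 - Q (b - j))"

lemma rate_nonneg: "0 \<le> rate j"
  using lam_pos Q_le_1 by (simp add: rate_def)

lemma nn_integral_success_value_next_arrival:
  fixes X Y :: "nat \<Rightarrow> real"
  assumes "within_bound b X Y n" "\<And>k. 0 \<le> Y k"
  shows "(\<integral>\<^sup>+ a. \<integral>\<^sup>+ s. success_value b rate (X(n := a)) (Y(Suc n := s)) (Suc n)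
      \<partial>distr Pr borel (S 0) \<partial>distr Pr borel (A n)) = stack_weight rate (lcfs_stack X Y n)"
proof -
  let ?xs = "lcfs_stack X Y n"
  have len: "length ?xs \<le> b"
    using assms(1) by (auto simp: within_bound_def)
  have service: "(\<integral>\<^sup>+ s. exp (- lam * (1 - Q (m - 1)) * s) \<partial>distr Pr borel (S 0)) = Q m"
    if "1 \<le> m" "m < b" for m
    using Q_rec[OF that] by (simp add: nn_integral_distr)
  have "(\<integral>\<^sup>+ s. success_value b rate (X(n := a)) (Y(Suc n := s)) (Suc n) \<partial>distr Pr borel (S 0)) =
      pre_arrival_weight Q rate b (lcfs_serve ?xs a)" for a
    using nn_integral_after_arrival[of "distr Pr borel (S 0)" Q b lam rate "lcfs_serve ?xs a"]
      le_trans[OF length_lcfs_serve_le len] service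
    by (simp add: success_value_after_arrival[OF assms(1)] prob_space_distr Q_nonneg Q_0 rate_def Let_def)
  then have "(\<integral>\<^sup>+ a. \<integral>\<^sup>+ s. success_value b rate (X(n := a)) (Y(Suc n := s)) (Suc n)
      \<partial>distr Pr borel (S 0) \<partial>distr Pr borel (A n)) =
    (\<integral>\<^sup>+ a. exponential_density lam a * pre_arrival_weight Q rate b (lcfs_serve ?xs a) \<partial>lborel)"
    using measurable_pre_arrival_weight_lcfs_serve[of Q rate b ?xs 0]
    by (simp add: nn_integral_distr_arrival)
  also have "\<dots> = stack_weight rate ?xs"
    using lcfs_stack_nonneg[of n Y X] assms(2) len
    by (intro nn_integral_pre_arrival_weight lam_pos Q_nonneg Q_le_1) (auto simp: rate_def)
  finally show ?thesis .
qed

lemma nn_integral_success_value_step: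
  "(\<integral>\<^sup>+ w. (if within_bound b (\<lambda>k. A k w) (\<lambda>k. S k w) n
      then success_value b rate (\<lambda>k. A k w) (\<lambda>k. S k w) (Suc n) else 0) \<partial>Pr) =
   (\<integral>\<^sup>+ w. (if within_bound b (\<lambda>k. A k w) (\<lambda>k. S k w) n
      then ennreal (stack_weight rate (lcfs_stack (\<lambda>k. A k w) (\<lambda>k. S k w) n)) else 0) \<partial>Pr)"
proof -
  define Phi where "Phi z = (if within_bound b (arrivals z) (services z) n
    then success_value b rate (arrivals z) (services z) (Suc n) else 0)" for z
  have Phi: "Phi \<in> borel_measurable path_space"
    unfolding Phi_def
    by (intro measurable_If predE pred_within_bound measurable_success_value borel_measurable_const)
  have resampled: "Phi ((sample_path w)(Inl n := a, Inr (Suc n) := s)) =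
      (if within_bound b (\<lambda>k. A k w) (\<lambda>k. S k w) n
       then success_value b rate ((\<lambda>k. A k w)(n := a)) ((\<lambda>k. S k w)(Suc n := s)) (Suc n) else 0)" for w a s
  proof -
    have "within_bound b ((\<lambda>k. A k w)(n := a)) ((\<lambda>k. S k w)(Suc n := s)) n =
        within_bound b (\<lambda>k. A k w) (\<lambda>k. S k w) n"
      by (rule within_bound_cong) auto
    then show ?thesis
      by (simp add: Phi_def)
  qed
  have "(\<integral>\<^sup>+ w. Phi (sample_path w) \<partial>Pr) =
    (\<integral>\<^sup>+ w. \<integral>\<^sup>+ a. \<integral>\<^sup>+ s. Phi ((sample_path w)(Inl n := a, Inr (Suc n) := s))
       \<partial>distr Pr borel (S 0) \<partial>distr Pr borel (A n) \<partial>Pr)"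
    by (rule nn_integral_resample_next_arrival[OF Phi])
  also have "\<dots> = (\<integral>\<^sup>+ w. (if within_bound b (\<lambda>k. A k w) (\<lambda>k. S k w) n
      then ennreal (stack_weight rate (lcfs_stack (\<lambda>k. A k w) (\<lambda>k. S k w) n)) else 0) \<partial>Pr)"
    using AE_S_nonneg
    by (intro nn_integral_cong_AE)
       (erule AE_mp, rule AE_I2, auto simp: resampled nn_integral_success_value_next_arrival)
  finally show ?thesis
    by (simp add: Phi_def cong: if_cong)
qed

lemma nn_integral_success_value:
  "(\<integral>\<^sup>+ w. success_value b rate (\<lambda>k. A k w) (\<lambda>k. S k w) n \<partial>Pr) =
    (\<integral>\<^sup>+ w. exp (- lam * (1 - Q (b - 1)) * S 0 w) \<partial>Pr)"
proof (induction n)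
  case 0
  have "success_value b rate (\<lambda>k. A k w) (\<lambda>k. S k w) 0 = exp (- lam * (1 - Q (b - 1)) * S 0 w)" for w
    using b_pos by (simp add: success_value_def within_bound_0 not_ended_within_bound_0 rate_def)
  then show ?case
    by simp
next
  case (Suc n)
  let ?ended = "\<lambda>w. ended_within_bound b (\<lambda>k. A k w) (\<lambda>k. S k w) n"
    and ?within = "\<lambda>w. within_bound b (\<lambda>k. A k w) (\<lambda>k. S k w) n"
    and ?weight = "\<lambda>w. ennreal (stack_weight rate (lcfs_stack (\<lambda>k. A k w) (\<lambda>k. S k w) n))"
  have "(\<integral>\<^sup>+ w. success_value b rate (\<lambda>k. A k w) (\<lambda>k. S k w) (Suc n) \<partial>Pr) =
      (\<integral>\<^sup>+ w. (if ?ended w then 1 else 0) \<partial>Pr) +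
      (\<integral>\<^sup>+ w. (if ?within w then success_value b rate (\<lambda>k. A k w) (\<lambda>k. S k w) (Suc n) else 0) \<partial>Pr)"
    by (subst success_value_Suc) (rule nn_integral_add; measurable)
  also have "\<dots> = (\<integral>\<^sup>+ w. (if ?ended w then 1 else 0) \<partial>Pr) + (\<integral>\<^sup>+ w. (if ?within w then ?weight w else 0) \<partial>Pr)"
    by (simp only: nn_integral_success_value_step)
  also have "\<dots> = (\<integral>\<^sup>+ w. success_value b rate (\<lambda>k. A k w) (\<lambda>k. S k w) n \<partial>Pr)"
  proof -
    have [measurable]: "(\<lambda>w. stack_weight rate (lcfs_stack (\<lambda>k. A k w) (\<lambda>k. S k w) n)) \<in> borel_measurable Pr"
      by (rule measurable_sample_path_compose[OF measurable_stack_weight[OF measurable_real_list_lcfs_stack]])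
    show ?thesis
      unfolding success_value_def by (rule nn_integral_add[symmetric]) measurable
  qed
  finally show ?case
    using Suc.IH by simp
qed

lemma emeasure_ended_within_bound_le:
  "emeasure Pr {w \<in> space Pr. ended_within_bound b (\<lambda>k. A k w) (\<lambda>k. S k w) n} \<le>
    (\<integral>\<^sup>+ w. exp (- lam * (1 - Q (b - 1)) * S 0 w) \<partial>Pr)"
proof -
  have "emeasure Pr {w \<in> space Pr. ended_within_bound b (\<lambda>k. A k w) (\<lambda>k. S k w) n} =
      (\<integral>\<^sup>+ w. (if ended_within_bound b (\<lambda>k. A k w) (\<lambda>k. S k w) n then 1 else 0) \<partial>Pr)"
    by (rule emeasure_Collect_eq_nn_integral) measurable
  also have "\<dots> \<le> (\<integral>\<^sup>+ w. success_value b rate (\<lambda>k. A k w) (\<lambda>k. S k w) n \<partial>Pr)"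
    by (intro nn_integral_mono ended_le_success_value)
  finally show ?thesis
    by (simp only: nn_integral_success_value)
qed

lemma le_emeasure_ended_plus_within_bound:
  "(\<integral>\<^sup>+ w. exp (- lam * (1 - Q (b - 1)) * S 0 w) \<partial>Pr) \<le>
    emeasure Pr {w \<in> space Pr. ended_within_bound b (\<lambda>k. A k w) (\<lambda>k. S k w) n} +
    emeasure Pr {w \<in> space Pr. within_bound b (\<lambda>k. A k w) (\<lambda>k. S k w) n}"
proof -
  have "(\<integral>\<^sup>+ w. exp (- lam * (1 - Q (b - 1)) * S 0 w) \<partial>Pr) =
      (\<integral>\<^sup>+ w. success_value b rate (\<lambda>k. A k w) (\<lambda>k. S k w) n \<partial>Pr)"
    by (simp only: nn_integral_success_value)
  also have "\<dots> \<le> (\<integral>\<^sup>+ w. (if ended_within_bound b (\<lambda>k. A k w) (\<lambda>k. S k w) n then 1 else 0) +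
      (if within_bound b (\<lambda>k. A k w) (\<lambda>k. S k w) n then 1 else 0) \<partial>Pr)"
    using AE_S_nonneg
    by (intro nn_integral_mono_AE)
       (erule AE_mp, rule AE_I2, rule impI, rule success_value_le[OF rate_nonneg], simp)
  also have "\<dots> = emeasure Pr {w \<in> space Pr. ended_within_bound b (\<lambda>k. A k w) (\<lambda>k. S k w) n} +
      emeasure Pr {w \<in> space Pr. within_bound b (\<lambda>k. A k w) (\<lambda>k. S k w) n}"
    by (simp add: nn_integral_add emeasure_Collect_eq_nn_integral)
  finally show ?thesis .
qed

theorem emeasure_busy_max_le:
  "emeasure Pr {w \<in> space Pr. busy_max (\<lambda>k. A k w) (\<lambda>k. S k w) \<le> enat b} =
    (\<integral>\<^sup>+ w. exp (- lam * (1 - Q (b - 1)) * S 0 w) \<partial>Pr)"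
  (is "_ = ?C")
proof -
  define ended where "ended n = {w \<in> space Pr. ended_within_bound b (\<lambda>k. A k w) (\<lambda>k. S k w) n}" for n
  define running where "running n = {w \<in> space Pr. within_bound b (\<lambda>k. A k w) (\<lambda>k. S k w) n}" for n
  have [measurable]: "ended n \<in> sets Pr" "running n \<in> sets Pr" for n
    unfolding ended_def running_def by measurable
  have "(\<Inter>n. running n) = {w \<in> space Pr. \<forall>n. within_bound b (\<lambda>k. A k w) (\<lambda>k. S k w) n}"
    by (auto simp: running_def)
  then have forever: "emeasure Pr (\<Inter>n. running n) = 0"
    using prob_within_bound_forever[OF b_pos] by (simp add: emeasure_eq_measure)
  have lim_ended: "(\<lambda>n. emeasure Pr (ended n)) \<longlonglongrightarrow> emeasure Pr (\<Union>n. ended n)"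
    by (intro Lim_emeasure_incseq incseq_SucI) (auto simp: ended_def ended_within_bound_Suc)
  have "(\<lambda>n. emeasure Pr (running n)) \<longlonglongrightarrow> emeasure Pr (\<Inter>n. running n)"
    by (intro Lim_emeasure_decseq decseq_SucI) (auto simp: running_def within_bound_Suc)
  with lim_ended forever have "(\<lambda>n. emeasure Pr (ended n) + emeasure Pr (running n)) \<longlonglongrightarrow> emeasure Pr (\<Union>n. ended n)"
    using tendsto_add[of _ "emeasure Pr (\<Union>n. ended n)" sequentially _ 0] by simp
  then have "?C \<le> emeasure Pr (\<Union>n. ended n)"
    by (rule LIMSEQ_le_const) (use le_emeasure_ended_plus_within_bound in \<open>auto simp: ended_def running_def\<close>)
  moreover have "emeasure Pr (\<Union>n. ended n) \<le> ?C"
    by (rule LIMSEQ_le_const2[OF lim_ended]) (use emeasure_ended_within_bound_le in \<open>auto simp: ended_def\<close>)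
  moreover have "{w \<in> space Pr. busy_max (\<lambda>k. A k w) (\<lambda>k. S k w) \<le> enat b} =
      (\<Union>n. ended n) \<union> (\<Inter>n. running n)"
    by (auto simp: busy_max_le_iff_ended_or_within_bound ended_def running_def)
  moreover have "(\<Inter>n. running n) \<in> null_sets Pr"
    using forever by (intro null_setsI) auto
  ultimately show ?thesis
    by (simp add: emeasure_Un_null_set)
qed

end

theorem corollary2:
  fixes Pr :: "'w measure" and lam :: real
    and A :: "nat \<Rightarrow> 'w \<Rightarrow> real" and S :: "nat \<Rightarrow> 'w \<Rightarrow> real"
    and P :: "nat \<Rightarrow> real"
  assumes "prob_space Pr"
    and lam_pos: "0 < lam"
    and indep: "prob_space.indep_vars Pr (\<lambda>_. borel)
                  (\<lambda>i. case i of Inl n \<Rightarrow> A n | Inr n \<Rightarrow> S n) UNIV"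
    and arr: "\<And>n. distributed Pr lborel (A n) (exponential_density lam)"
    and S_meas: "\<And>n. S n \<in> borel_measurable Pr"
    and S_ident: "\<And>n. distr Pr borel (S n) = distr Pr borel (S 0)"
    and S_nonneg: "\<And>n. AE w in Pr. 0 \<le> S n w"
    and S_int: "integrable Pr (S 0)"
    and load: "lam * prob_space.expectation Pr (S 0) < 1"
    and P_def: "\<And>b. P b = measure Pr {w \<in> space Pr. busy_max (\<lambda>n. A n w) (\<lambda>n. S n w) \<le> enat b}"
  shows "\<forall>b::nat. b \<ge> 1 \<longrightarrow>
           P b = prob_space.expectation Pr (\<lambda>w. exp (- lam * (1 - P (b - 1)) * S 0 w))"
proof -
  interpret lcfs_queue Pr lam A S
    using \<open>prob_space Pr\<close> lam_pos indep arr S_ident S_nonneg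
    by (intro lcfs_queue.intro lcfs_queue_axioms.intro)
  have P_bounds: "0 \<le> P m" "P m \<le> 1" for m
    by (simp_all add: P_def)
  have "P 0 = 0"
    by (simp add: P_def not_busy_max_le_0)
  have rec: "ennreal (P b) = (\<integral>\<^sup>+ w. exp (- lam * (1 - P (b - 1)) * S 0 w) \<partial>Pr)" if "1 \<le> b" for b
    using that
  proof (induction b rule: less_induct)
    case (less b)
    interpret lcfs_queue_level Pr lam A S P b
      using less P_bounds \<open>P 0 = 0\<close> by unfold_locales auto
    show ?case
      using emeasure_busy_max_le by (simp add: P_def emeasure_eq_measure)
  qed
  moreover have "expectation (\<lambda>w. exp (- c * S 0 w)) = enn2real (\<integral>\<^sup>+ w. exp (- c * S 0 w) \<partial>Pr)" for c
    by (rule integral_eq_nn_integral) auto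
  ultimately show ?thesis
    using P_bounds by (metis enn2real_ennreal mult_minus_left)
qed

end
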